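(* Let $\mathbb Y=\mathbb R^m$, $g\colon\mathbb X\to\mathbb R^m$ twice continuously differentiable, $D\subset\mathbb R^m$ closed and polyhedral locally around $g(\bar x)$, $\Phi(x):=g(x)-D$, $(\bar x,0)\in\operatorname{gph}\Phi$, $u\in\mathbb S_{\mathbb X}$, and assume SOSCMS$(u)$: every $y^*\in\mathcal N_D(g(\bar x);\nabla g(\bar x)u)$ with $\nabla g(\bar x)^*y^*=0$ and $\nabla^2\langle y^*,g\rangle(\bar x)[u,u]\ge0$ satisfies $y^*=0$. Let $K:=\mathcal N_{\mathcal T_D(g(\bar x))}(\nabla g(\bar x)u)$, $\mathbf T(u):=\mathcal T_{\mathcal T_D(g(\bar x))}(\nabla g(\bar x)u)$, $w_s(u,v):=\nabla g(\bar x)s+\tfrac12\nabla^2g(\bar x)[u,u]-v$. Then: (i) For each $s\in\mathbb X$, $\nabla g(\bar x)^*y^*=0$, $\nabla^2\langle y^*,g\rangle(\bar x)(u)+\nabla g(\bar x)^*z^*=0$, $y^*\in\mathcal N_{\mathbf T(u)}(w_s(u,0))$, $z^*\in\mathcal T_{\mathcal N_{\mathbf T(u)}(w_s(u,0))}(y^* )$ imply $y^*=0$; and for all $x^*,s\in\mathbb X$, $y^*,z^*,v\in\mathbb R^m$ with $\langle y^*,v\rangle\ge0$, $x^*=\nabla^2\langle y^*,g\rangle(\bar x)(u)+\nabla g(\bar x)^*z^*$, $y^*\in\mathcal N_{\mathbf T(u)}(w_s(u,v))\cap\ker\nabla g(\bar x)^*$, $z^*\in\mathcal T_{\mathcal N_{\mathbf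 T(u)}(w_s(u,v))}(y^* )$, there is $\lambda\in K$ with $x^*=\nabla g(\bar x)^*\lambda$. (ii) $\nabla g(\bar x)^*y^*=0$, $\nabla^2\langle y^*,g\rangle(\bar x)(u)+\nabla g(\bar x)^*z^*=0$, $y^*\in K$, $z^*\in\mathcal T_K(y^* )$ imply $y^*=0$; and for all $x^*\in\mathbb X$ with $\langle x^*,u\rangle\ge0$ and $y^*,z^*\in\mathbb R^m$ with $x^*=\nabla^2\langle y^*,g\rangle(\bar x)(u)+\nabla g(\bar x)^*z^*$, $y^*\in K\cap\ker\nabla g(\bar x)^*$, $z^*\in\mathcal T_K(y^* )$, there is $\lambda\in K$ (hence $\lambda\in\mathcal N_D(g(\bar x))$) with $x^*=\nabla g(\bar x)^*\lambda$.
   Context: $D$ polyhedral locally around $y$: $D\cap V$ is a finite union of convex polyhedra for some neighbourhood $V$ of $y$. $\mathcal T_Q$ Bouligand tangent cone, $\mathcal N_Q$ limiting normal cone, $\mathcal N_D(y;w)$ directional limiting normal cone (limits of $\eta_k\in\widehat{\mathcal N}_D(y+t_kw_k)$ with $w_k\to w$, $t_k\searrow0$). $\nabla^2\langle y^*,g\rangle(\bar x)$ Hessian of $x\mapsto\langle y^*,g(x)\rangle$; $\nabla^2\langle y^*,g\rangle(\bar x)[u,u]=\langle u,\nabla^2\langle y^*,g\rangle(\bar x)u\rangle$; $\nabla^2g(\bar x)[u,u]=\sum_i\langle u,\nabla^2\langle e_i,g\rangle(\bar x)u\rangle e_i$. *)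

theory Defs
  imports "HOL-Analysis.Analysis"
begin

definition bouligand_tangent_cone :: "'a::real_normed_vector set \<Rightarrow> 'a \<Rightarrow> 'a set" where
  "bouligand_tangent_cone Q x =
     {w. \<exists>t wk. (\<forall>k. t k > (0::real)) \<and> t \<longlonglongrightarrow> 0 \<and> wk \<longlonglongrightarrow> w
                \<and> (\<forall>k. x + t k *\<^sub>R wk k \<in> Q)}"

definition frechet_normal_cone :: "'a::real_inner set \<Rightarrow> 'a \<Rightarrow> 'a set" where
  "frechet_normal_cone Q x =
     {\<eta>. x \<in> Q \<and> (\<forall>\<epsilon>>0. \<exists>\<delta>>0. \<forall>x'\<in>Q. norm (x' - x) < \<delta> \<longrightarrow>
                 \<eta> \<bullet> (x' - x) \<le> \<epsilon> * norm (x' - x))}"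

definition limiting_normal_cone :: "'a::real_inner set \<Rightarrow> 'a \<Rightarrow> 'a set" where
  "limiting_normal_cone Q x =
     {\<eta>. x \<in> Q \<and> (\<exists>xk \<eta>k. (\<forall>k. \<eta>k k \<in> frechet_normal_cone Q (xk k))
                \<and> xk \<longlonglongrightarrow> x \<and> \<eta>k \<longlonglongrightarrow> \<eta>)}"

definition dir_limiting_normal_cone :: "'a::real_inner set \<Rightarrow> 'a \<Rightarrow> 'a \<Rightarrow> 'a set" where
  "dir_limiting_normal_cone Q y w =
     {\<eta>. \<exists>t wk \<eta>k. (\<forall>k. t k > (0::real)) \<and> t \<longlonglongrightarrow> 0 \<and> wk \<longlonglongrightarrow> w
          \<and> (\<forall>k. \<eta>k k \<in> frechet_normal_cone Q (y + t k *\<^sub>R wk k)) \<and> \<eta>k \<longlonglongrightarrow> \<eta>}"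

definition locally_polyhedral_at :: "'a::euclidean_space set \<Rightarrow> 'a \<Rightarrow> bool" where
  "locally_polyhedral_at D y \<longleftrightarrow>
     (\<exists>V \<F>. open V \<and> y \<in> V \<and> finite \<F> \<and> (\<forall>P\<in>\<F>. polyhedron P) \<and> D \<inter> V = \<Union>\<F>)"

text \<open>For a second derivative H (bilinear, as nested bounded linear maps) and a
  multiplier y, the vector the Hessian of <y,g> at x applied to u \<in> X, i.e. the Riesz representative of
  w \<mapsto> \<langle>y, H[w,u]\<rangle>.\<close>
definition hess_lag_apply ::
  "('a::euclidean_space \<Rightarrow>\<^sub>L ('a \<Rightarrow>\<^sub>L 'b::real_inner)) \<Rightarrow> 'b \<Rightarrow> 'a \<Rightarrow> 'a" where
  "hess_lag_apply H y u = (\<Sum>i\<in>Basis. (y \<bullet> blinfun_apply (blinfun_apply H i) u) *\<^sub>R i)"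

end

theory Submission
  imports Defs
begin

text \<open>Near $g(\bar x)$ the locally polyhedral set $D$ coincides with $g(\bar x) + \mathcal T_D(g(\bar x))$,
  and near $a = \nabla g(\bar x)u$ the closed cone $\mathcal T_D(g(\bar x))$ coincides with $a + \mathbf T(u)$.
  Shrinking base points by positive scalars, which preserves Fr\'echet normals of a cone, therefore
  shows $\mathcal N_{\mathbf T(u)}(w) \subseteq K \subseteq \mathcal N_D(g(\bar x);a) \cap \mathcal N_D(g(\bar x))$.
  Normals to a cone at a point are orthogonal to it, so $K \perp a$, and so is every tangent vector
  to $K$. Pairing the second-order equation with $u$ thus gives
  $\langle y^*, \nabla^2 g(\bar x)[u,u]\rangle = \langle x^*, u\rangle \ge 0$ (in (i): $= 2\langle y^*,v\rangle$,
  using $y^* \perp w_s(u,v)$), and SOSCMS forces $y^* = 0$. A tangent vector to a closed cone at $0$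
  lies in the cone, so $z^* \in K$ and $x^* = \nabla g(\bar x)^* z^*$.\<close>

definition locally_conic_at :: "'a::real_normed_vector set \<Rightarrow> 'a \<Rightarrow> 'a set \<Rightarrow> bool" where
  "locally_conic_at D y C \<longleftrightarrow>
     cone C \<and> closed C \<and> (\<exists>e>0. \<forall>v. norm v < e \<longrightarrow> (y + v \<in> D \<longleftrightarrow> v \<in> C))"

lemma halfspace_locally_conic:
  fixes a y :: "'a::euclidean_space"
  obtains C e where "e > 0" "polyhedron C" "cone C"
    "\<And>v. norm v < e \<Longrightarrow> y + v \<in> {x. a \<bullet> x \<le> b} \<longleftrightarrow> v \<in> C"
proof -
  have cs: "\<bar>a \<bullet> v\<bar> < (norm a + 1) * e" if "norm v < e" for v e
  proof -
    have "\<bar>a \<bullet> v\<bar> \<le> norm a * norm v" by (rule Cauchy_Schwarz_ineq2)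
    also have "\<dots> \<le> norm a * e" using that by (simp add: mult_left_mono)
    finally show ?thesis unfolding distrib_right using that norm_ge_zero[of v] by linarith
  qed
  have na: "norm a + 1 > 0" using norm_ge_zero[of a] by linarith
  consider "a \<bullet> y < b" | "a \<bullet> y = b" | "a \<bullet> y > b" by linarith
  then show ?thesis
  proof cases
    case 1
    define e where "e = (b - a \<bullet> y) / (norm a + 1)"
    have "e > 0" using 1 na by (simp add: e_def)
    moreover have "y + v \<in> {x. a \<bullet> x \<le> b}" if "norm v < e" for v
      using cs[OF that] na by (simp add: inner_add_right e_def)
    ultimately show ?thesis by (intro that[of e UNIV]) auto
  next
    case 2
    show ?thesis
      by (rule that[of 1 "{v. a \<bullet> v \<le> 0}"])
        (auto simp: polyhedron_halfspace_le cone_def mult_nonneg_nonpos inner_add_right 2)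
  next
    case 3
    define e where "e = (a \<bullet> y - b) / (norm a + 1)"
    have "e > 0" using 3 na by (simp add: e_def)
    moreover have "y + v \<notin> {x. a \<bullet> x \<le> b}" if "norm v < e" for v
      using cs[OF that] na by (simp add: inner_add_right e_def)
    ultimately show ?thesis by (intro that[of e "{}"]) auto
  qed
qed

lemma polyhedron_locally_conic:
  fixes y :: "'a::euclidean_space"
  assumes "polyhedron P"
  obtains C e where "e > 0" "polyhedron C" "cone C" "\<And>v. norm v < e \<Longrightarrow> y + v \<in> P \<longleftrightarrow> v \<in> C"
proof -
  obtain F where F: "finite F" "P = \<Inter>F" "\<forall>h\<in>F. \<exists>a b. a \<noteq> 0 \<and> h = {x. a \<bullet> x \<le> b}"
    using assms unfolding polyhedron_def by blast
  have "\<exists>C e. e > 0 \<and> polyhedron C \<and> cone C \<and> (\<forall>v. norm v < e \<longrightarrow> (y + v \<in> \<Inter>F \<longleftrightarrow> v \<in> C))"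
    using F(1,3)
  proof (induction F rule: finite_induct)
    case empty
    show ?case by (intro exI[of _ UNIV] exI[of _ 1]) auto
  next
    case (insert h F)
    obtain a b where h: "h = {x. a \<bullet> x \<le> b}" using insert.prems by blast
    obtain C1 e1 where 1: "e1 > 0" "polyhedron C1" "cone C1" "\<And>v. norm v < e1 \<Longrightarrow> y + v \<in> h \<longleftrightarrow> v \<in> C1"
      using halfspace_locally_conic[of y a b] unfolding h by blast
    obtain C2 e2 where 2: "e2 > 0" "polyhedron C2" "cone C2" "\<forall>v. norm v < e2 \<longrightarrow> (y + v \<in> \<Inter>F \<longleftrightarrow> v \<in> C2)"
      using insert.IH insert.prems by blast
    have "cone (C1 \<inter> C2)" using 1(3) 2(3) by (auto simp: cone_def)
    then show ?case
      using 1 2 by (intro exI[of _ "C1 \<inter> C2"] exI[of _ "min e1 e2"]) auto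
  qed
  then obtain C e where "e > 0" "polyhedron C" "cone C" "\<forall>v. norm v < e \<longrightarrow> (y + v \<in> P \<longleftrightarrow> v \<in> C)"
    unfolding F(2) by blast
  then show ?thesis using that by blast
qed

lemma locally_polyhedral_imp_locally_conic:
  fixes y :: "'a::euclidean_space"
  assumes "locally_polyhedral_at D y"
  obtains C where "locally_conic_at D y C" "\<And>x. locally_polyhedral_at C x"
proof -
  obtain V F where VF: "open V" "y \<in> V" "finite F" "\<forall>P\<in>F. polyhedron P" "D \<inter> V = \<Union>F"
    using assms unfolding locally_polyhedral_at_def by blast
  obtain eV where eV: "eV > 0" "ball y eV \<subseteq> V" using VF(1,2) open_contains_ball by blast
  have "\<exists>C e. e > 0 \<and> polyhedron C \<and> cone C \<and> (\<forall>v. norm v < e \<longrightarrow> (y + v \<in> P \<longleftrightarrow> v \<in> C))"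
    if "P \<in> F" for P
  proof -
    have "polyhedron P" using that VF(4) by blast
    then obtain C e where "e > 0" "polyhedron C" "cone C" "\<And>v. norm v < e \<Longrightarrow> y + v \<in> P \<longleftrightarrow> v \<in> C"
      by (rule polyhedron_locally_conic[where y = y]) blast
    then show ?thesis by blast
  qed
  then obtain CP eP where CP: "\<And>P. P \<in> F \<Longrightarrow> eP P > 0 \<and> polyhedron (CP P) \<and> cone (CP P) \<and>
     (\<forall>v. norm v < eP P \<longrightarrow> (y + v \<in> P \<longleftrightarrow> v \<in> CP P))"
    by metis
  define C where "C = \<Union>(CP ` F)"
  define e where "e = Min (insert eV (eP ` F))"
  have "e > 0" unfolding e_def using VF(3) eV(1) CP by auto
  have e_le: "e \<le> eV" "\<And>P. P \<in> F \<Longrightarrow> e \<le> eP P" unfolding e_def using VF(3) by auto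
  have "y + v \<in> D \<longleftrightarrow> v \<in> C" if "norm v < e" for v
  proof -
    have "y + v \<in> V" using that e_le(1) eV(2) by (auto simp: dist_norm)
    then have "y + v \<in> D \<longleftrightarrow> (\<exists>P\<in>F. y + v \<in> P)" using VF(5) by blast
    moreover have "y + v \<in> P \<longleftrightarrow> v \<in> CP P" if "P \<in> F" for P
      using CP[OF that] e_le(2)[OF that] \<open>norm v < e\<close> by auto
    ultimately show ?thesis unfolding C_def by blast
  qed
  moreover have "closed C"
    unfolding C_def using VF(3) CP polyhedron_imp_closed by (intro closed_Union) auto
  moreover have "cone C" unfolding C_def using CP by (intro cone_Union[rule_format]) auto
  ultimately have "locally_conic_at D y C"
    unfolding locally_conic_at_def using \<open>e > 0\<close> by blast
  moreover have "locally_polyhedral_at C x" for x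
    unfolding locally_polyhedral_at_def C_def using VF(3) CP
    by (intro exI[of _ UNIV] exI[of _ "CP ` F"]) auto
  ultimately show ?thesis by (rule that)
qed

lemma exists_vanishing_scaling:
  fixes x :: "nat \<Rightarrow> 'a::real_normed_vector"
  assumes "e > 0"
  obtains t where "\<And>k. t k > 0" "t \<longlonglongrightarrow> 0" "(\<lambda>k. t k *\<^sub>R x k) \<longlonglongrightarrow> 0"
    "\<And>k. norm (t k *\<^sub>R x k) < e"
proof
  define b where "b k = e / real (Suc k)" for k
  define t where "t k = b k / (2 * (norm (x k) + 1))" for k
  have n1: "norm (x k) + 1 > 0" for k using norm_ge_zero[of "x k"] by linarith
  have b: "b k > 0" "b k \<le> e" for k using assms by (auto simp: b_def field_simps)
  have b_lim: "b \<longlonglongrightarrow> 0" unfolding b_def using LIMSEQ_Suc[OF lim_const_over_n[of e]] by simp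
  show t_pos: "t k > 0" for k unfolding t_def by (intro divide_pos_pos mult_pos_pos b(1) n1) simp
  have t_le: "t k \<le> b k / 2" for k
    unfolding t_def using b(1)[of k] n1[of k] by (intro divide_left_mono) auto
  have tx_le: "norm (t k *\<^sub>R x k) \<le> b k / 2" for k
  proof -
    have "norm (t k *\<^sub>R x k) = b k / 2 * (norm (x k) / (norm (x k) + 1))"
      using b(1)[of k] by (simp add: t_def)
    also have "\<dots> \<le> b k / 2" using b(1)[of k] n1[of k] by (intro mult_left_le) auto
    finally show ?thesis .
  qed
  show "t \<longlonglongrightarrow> 0"
    by (rule Lim_null_comparison[of _ "\<lambda>k. b k / 2"])
      (use t_pos t_le b_lim in \<open>auto intro!: always_eventually tendsto_divide_zero simp: abs_of_pos\<close>)
  show "(\<lambda>k. t k *\<^sub>R x k) \<longlonglongrightarrow> 0"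
    by (rule Lim_null_comparison[of _ "\<lambda>k. b k / 2"])
      (use tx_le b_lim in \<open>auto intro!: always_eventually tendsto_divide_zero\<close>)
  show "norm (t k *\<^sub>R x k) < e" for k using tx_le[of k] b[of k] by linarith
qed

lemma bouligand_tangent_cone_locally_conic:
  assumes "locally_conic_at D y C"
  shows "bouligand_tangent_cone D y = C"
proof -
  obtain e where C: "cone C" "closed C" "e > 0" and DC: "\<And>v. norm v < e \<Longrightarrow> y + v \<in> D \<longleftrightarrow> v \<in> C"
    using assms unfolding locally_conic_at_def by blast
  have scale: "w \<in> C" if "t > 0" "t *\<^sub>R w \<in> C" for t w
    using mem_cone[OF C(1) that(2), of "inverse t"] that(1) by simp
  show ?thesis
  proof (intro subset_antisym subsetI)
    fix w assume "w \<in> bouligand_tangent_cone D y"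
    then obtain t wk where tw: "\<And>k. t k > 0" "t \<longlonglongrightarrow> 0" "wk \<longlonglongrightarrow> w" "\<And>k. y + t k *\<^sub>R wk k \<in> D"
      unfolding bouligand_tangent_cone_def by blast
    have "(\<lambda>k. t k *\<^sub>R wk k) \<longlonglongrightarrow> 0" using tendsto_scaleR[OF tw(2,3)] by simp
    then have "\<forall>\<^sub>F k in sequentially. norm (t k *\<^sub>R wk k) < e"
      by (rule order_tendstoD(2)[OF tendsto_norm_zero \<open>e > 0\<close>])
    then have "\<forall>\<^sub>F k in sequentially. wk k \<in> C"
      by eventually_elim (use DC tw(1,4) scale in blast)
    then show "w \<in> C" using C(2) tw(3) by (metis Lim_in_closed_set trivial_limit_sequentially)
  next
    fix w assume "w \<in> C"
    obtain t where t: "\<And>k. t k > 0" "t \<longlonglongrightarrow> 0" "\<And>k. norm (t k *\<^sub>R w) < e"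
      using exists_vanishing_scaling[OF \<open>e > 0\<close>, of "\<lambda>_. w"] by blast
    have "y + t k *\<^sub>R w \<in> D" for k
      using DC[OF t(3)] mem_cone[OF C(1) \<open>w \<in> C\<close>] t(1) less_imp_le by blast
    then show "w \<in> bouligand_tangent_cone D y"
      unfolding bouligand_tangent_cone_def using t(1,2)
      by (intro CollectI exI[of _ t] exI[of _ "\<lambda>_. w"]) auto
  qed
qed

lemma locally_polyhedral_reduction:
  fixes y :: "'a::euclidean_space"
  assumes "locally_polyhedral_at D y"
  shows "locally_conic_at D y (bouligand_tangent_cone D y)"
    and "locally_polyhedral_at (bouligand_tangent_cone D y) x"
proof -
  obtain C where "locally_conic_at D y C" "\<And>x. locally_polyhedral_at C x"
    using locally_polyhedral_imp_locally_conic[OF assms] by metis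
  then show "locally_conic_at D y (bouligand_tangent_cone D y)"
    and "locally_polyhedral_at (bouligand_tangent_cone D y) x"
    by (simp_all add: bouligand_tangent_cone_locally_conic)
qed

lemma bouligand_tangent_cone_cone_at_0:
  assumes "cone C" "closed C"
  shows "bouligand_tangent_cone C 0 = C"
  using assms by (intro bouligand_tangent_cone_locally_conic) (auto simp: locally_conic_at_def intro: exI[of _ 1])

lemma bouligand_tangent_cone_orthogonal:
  assumes "S \<subseteq> {p. p \<bullet> a = 0}" "y \<bullet> a = 0" "z \<in> bouligand_tangent_cone S y"
  shows "z \<bullet> a = 0"
proof -
  obtain t zk where tz: "\<And>k. t k > (0::real)" "zk \<longlonglongrightarrow> z" "\<And>k. y + t k *\<^sub>R zk k \<in> S"
    using assms(3) unfolding bouligand_tangent_cone_def by blast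
  have "t k * (zk k \<bullet> a) = 0" for k
    using assms(1,2) tz(3)[of k] by (auto simp: inner_add_left)
  then have "(\<lambda>k. zk k \<bullet> a) = (\<lambda>k. 0)" using tz(1) by (metis mult_eq_0_iff less_irrefl)
  moreover have "(\<lambda>k. zk k \<bullet> a) \<longlonglongrightarrow> z \<bullet> a" by (intro tendsto_intros tz(2))
  ultimately show ?thesis using LIMSEQ_unique tendsto_const by metis
qed

lemma frechet_normal_cone_feasible_direction:
  assumes "\<eta> \<in> frechet_normal_cone Q x" "\<delta>\<^sub>0 > 0" "\<And>t. 0 < t \<Longrightarrow> t < \<delta>\<^sub>0 \<Longrightarrow> x + t *\<^sub>R d \<in> Q"
  shows "\<eta> \<bullet> d \<le> 0"
proof (rule ccontr)
  assume pos: "\<not> \<eta> \<bullet> d \<le> 0"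
  then have "d \<noteq> 0" by auto
  define \<epsilon> where "\<epsilon> = (\<eta> \<bullet> d) / (2 * norm d)"
  have "\<epsilon> > 0" using pos \<open>d \<noteq> 0\<close> by (simp add: \<epsilon>_def)
  then obtain \<delta> where "\<delta> > 0" and \<delta>: "\<And>x'. x' \<in> Q \<Longrightarrow> norm (x' - x) < \<delta> \<Longrightarrow> \<eta> \<bullet> (x' - x) \<le> \<epsilon> * norm (x' - x)"
    using assms(1) unfolding frechet_normal_cone_def by blast
  define t where "t = min (\<delta>\<^sub>0 / 2) (\<delta> / (2 * norm d))"
  have t: "t > 0" "t < \<delta>\<^sub>0" using \<open>\<delta> > 0\<close> assms(2) \<open>d \<noteq> 0\<close> by (auto simp: t_def)
  have "t \<le> \<delta> / (2 * norm d)" by (simp add: t_def)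
  then have "t * norm d \<le> \<delta> / 2" using \<open>d \<noteq> 0\<close> by (simp add: field_simps)
  then have "\<eta> \<bullet> (t *\<^sub>R d) \<le> \<epsilon> * norm (t *\<^sub>R d)"
    using \<delta>[of "x + t *\<^sub>R d"] assms(3)[OF t] \<open>\<delta> > 0\<close> t(1) by simp
  then have "t * (\<eta> \<bullet> d) \<le> t * (\<eta> \<bullet> d) / 2"
    using t(1) \<open>d \<noteq> 0\<close> by (simp add: \<epsilon>_def)
  then show False using t(1) pos by simp
qed

lemma frechet_normal_cone_cone_orthogonal:
  assumes "cone C" "\<eta> \<in> frechet_normal_cone C x"
  shows "\<eta> \<bullet> x = 0"
proof -
  have "x \<in> C" using assms(2) by (simp add: frechet_normal_cone_def)
  have "x + t *\<^sub>R x \<in> C" if "0 < t" for t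
    using mem_cone[OF assms(1) \<open>x \<in> C\<close>, of "1 + t"] that by (simp add: algebra_simps)
  then have "\<eta> \<bullet> x \<le> 0" by (intro frechet_normal_cone_feasible_direction[OF assms(2), of 1]) auto
  have "x + t *\<^sub>R (- x) \<in> C" if "t < 1" for t
    using mem_cone[OF assms(1) \<open>x \<in> C\<close>, of "1 - t"] that by (simp add: algebra_simps)
  then have "\<eta> \<bullet> (- x) \<le> 0" by (intro frechet_normal_cone_feasible_direction[OF assms(2), of 1]) auto
  show ?thesis using \<open>\<eta> \<bullet> x \<le> 0\<close> \<open>\<eta> \<bullet> (- x) \<le> 0\<close> by simp
qed

lemma cone_frechet_normal_cone: "cone (frechet_normal_cone Q x)"
  unfolding cone_def
proof (intro ballI allI impI)
  fix \<eta> and c :: real assume \<eta>: "\<eta> \<in> frechet_normal_cone Q x" and "c \<ge> 0"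
  have "\<exists>\<delta>>0. \<forall>x'\<in>Q. norm (x' - x) < \<delta> \<longrightarrow> c *\<^sub>R \<eta> \<bullet> (x' - x) \<le> \<epsilon> * norm (x' - x)"
    if "\<epsilon> > 0" for \<epsilon>
  proof -
    have "\<epsilon> / (c + 1) > 0" using that \<open>c \<ge> 0\<close> by simp
    then obtain \<delta> where "\<delta> > 0"
      and \<delta>: "\<And>x'. x' \<in> Q \<Longrightarrow> norm (x' - x) < \<delta> \<Longrightarrow> \<eta> \<bullet> (x' - x) \<le> \<epsilon> / (c + 1) * norm (x' - x)"
      using \<eta> unfolding frechet_normal_cone_def by blast
    have "c *\<^sub>R \<eta> \<bullet> (x' - x) \<le> \<epsilon> * norm (x' - x)" if "x' \<in> Q" "norm (x' - x) < \<delta>" for x'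
    proof -
      have "c *\<^sub>R \<eta> \<bullet> (x' - x) \<le> c * (\<epsilon> / (c + 1)) * norm (x' - x)"
        using mult_left_mono[OF \<delta>[OF that] \<open>c \<ge> 0\<close>] by simp
      also have "\<dots> \<le> \<epsilon> * norm (x' - x)"
        using \<open>c \<ge> 0\<close> \<open>\<epsilon> > 0\<close> by (intro mult_right_mono) (auto simp: field_simps)
      finally show ?thesis .
    qed
    then show ?thesis using \<open>\<delta> > 0\<close> by blast
  qed
  then show "c *\<^sub>R \<eta> \<in> frechet_normal_cone Q x" using \<eta> by (simp add: frechet_normal_cone_def)
qed

lemma frechet_normal_cone_cone_scaleR:
  assumes "cone C" "c > 0" "\<eta> \<in> frechet_normal_cone C x"
  shows "\<eta> \<in> frechet_normal_cone C (c *\<^sub>R x)"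
proof -
  have "x \<in> C" using assms(3) by (simp add: frechet_normal_cone_def)
  have "\<exists>\<delta>>0. \<forall>x'\<in>C. norm (x' - c *\<^sub>R x) < \<delta> \<longrightarrow> \<eta> \<bullet> (x' - c *\<^sub>R x) \<le> \<epsilon> * norm (x' - c *\<^sub>R x)"
    if "\<epsilon> > 0" for \<epsilon>
  proof -
    obtain \<delta> where "\<delta> > 0" and \<delta>: "\<And>x'. x' \<in> C \<Longrightarrow> norm (x' - x) < \<delta> \<Longrightarrow> \<eta> \<bullet> (x' - x) \<le> \<epsilon> * norm (x' - x)"
      using assms(3) \<open>\<epsilon> > 0\<close> unfolding frechet_normal_cone_def by blast
    have "\<eta> \<bullet> (x' - c *\<^sub>R x) \<le> \<epsilon> * norm (x' - c *\<^sub>R x)"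
      if "x' \<in> C" "norm (x' - c *\<^sub>R x) < c * \<delta>" for x'
    proof -
      have eq: "x' - c *\<^sub>R x = c *\<^sub>R (inverse c *\<^sub>R x' - x)" using assms(2) by (simp add: algebra_simps)
      have "inverse c *\<^sub>R x' \<in> C" using mem_cone[OF assms(1) that(1)] assms(2) by simp
      moreover have "norm (inverse c *\<^sub>R x' - x) < \<delta>" using that(2) assms(2) by (simp add: eq)
      ultimately have "c * (\<eta> \<bullet> (inverse c *\<^sub>R x' - x)) \<le> c * (\<epsilon> * norm (inverse c *\<^sub>R x' - x))"
        using \<delta> assms(2) by simp
      then show ?thesis using assms(2) by (simp add: eq)
    qed
    then show ?thesis using \<open>\<delta> > 0\<close> assms(2) by (intro exI[of _ "c * \<delta>"]) auto
  qed
  then show ?thesis using mem_cone[OF assms(1) \<open>x \<in> C\<close>] assms(2) by (simp add: frechet_normal_cone_def)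
qed

lemma frechet_normal_cone_local_translate:
  assumes DC: "\<And>v. norm v < e \<Longrightarrow> y + v \<in> D \<longleftrightarrow> v \<in> C" and "norm v < e"
    and \<eta>: "\<eta> \<in> frechet_normal_cone C v"
  shows "\<eta> \<in> frechet_normal_cone D (y + v)"
proof -
  have "v \<in> C" using \<eta> by (simp add: frechet_normal_cone_def)
  have "\<exists>\<delta>>0. \<forall>x'\<in>D. norm (x' - (y + v)) < \<delta> \<longrightarrow> \<eta> \<bullet> (x' - (y + v)) \<le> \<epsilon> * norm (x' - (y + v))"
    if "\<epsilon> > 0" for \<epsilon>
  proof -
    obtain \<delta> where "\<delta> > 0" and \<delta>: "\<And>v'. v' \<in> C \<Longrightarrow> norm (v' - v) < \<delta> \<Longrightarrow> \<eta> \<bullet> (v' - v) \<le> \<epsilon> * norm (v' - v)"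
      using \<eta> \<open>\<epsilon> > 0\<close> unfolding frechet_normal_cone_def by blast
    have "\<eta> \<bullet> (x' - (y + v)) \<le> \<epsilon> * norm (x' - (y + v))"
      if "x' \<in> D" "norm (x' - (y + v)) < min \<delta> (e - norm v)" for x'
    proof -
      have eq: "x' - (y + v) = (x' - y) - v" by simp
      have "norm (x' - y) \<le> norm (x' - (y + v)) + norm v"
        using norm_triangle_ineq[of "x' - (y + v)" v] by simp
      then have "x' - y \<in> C" using DC[of "x' - y"] that by simp
      then show ?thesis using \<delta>[of "x' - y"] that(2) unfolding eq by simp
    qed
    then show ?thesis using \<open>\<delta> > 0\<close> \<open>norm v < e\<close> by (intro exI[of _ "min \<delta> (e - norm v)"]) auto
  qed
  then show ?thesis using DC[OF \<open>norm v < e\<close>] \<open>v \<in> C\<close> by (simp add: frechet_normal_cone_def)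
qed

lemma limiting_normal_cone_closure:
  "limiting_normal_cone Q x =
     {\<eta>. x \<in> Q \<and> (x, \<eta>) \<in> closure {(x', \<eta>'). \<eta>' \<in> frechet_normal_cone Q x'}}"
proof -
  have "(\<exists>xk \<eta>k. (\<forall>k. \<eta>k k \<in> frechet_normal_cone Q (xk k)) \<and> xk \<longlonglongrightarrow> x \<and> \<eta>k \<longlonglongrightarrow> \<eta>) \<longleftrightarrow>
        (\<exists>p. (\<forall>k. p k \<in> {(x', \<eta>'). \<eta>' \<in> frechet_normal_cone Q x'}) \<and> p \<longlonglongrightarrow> (x, \<eta>))" for \<eta>
  proof
    assume "\<exists>xk \<eta>k. (\<forall>k. \<eta>k k \<in> frechet_normal_cone Q (xk k)) \<and> xk \<longlonglongrightarrow> x \<and> \<eta>k \<longlonglongrightarrow> \<eta>"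
    then obtain xk \<eta>k where "\<forall>k. \<eta>k k \<in> frechet_normal_cone Q (xk k)" "xk \<longlonglongrightarrow> x" "\<eta>k \<longlonglongrightarrow> \<eta>"
      by blast
    then show "\<exists>p. (\<forall>k. p k \<in> {(x', \<eta>'). \<eta>' \<in> frechet_normal_cone Q x'}) \<and> p \<longlonglongrightarrow> (x, \<eta>)"
      by (intro exI[of _ "\<lambda>k. (xk k, \<eta>k k)"]) (auto intro: tendsto_Pair)
  next
    assume "\<exists>p. (\<forall>k. p k \<in> {(x', \<eta>'). \<eta>' \<in> frechet_normal_cone Q x'}) \<and> p \<longlonglongrightarrow> (x, \<eta>)"
    then obtain p where "\<forall>k. p k \<in> {(x', \<eta>'). \<eta>' \<in> frechet_normal_cone Q x'}" "p \<longlonglongrightarrow> (x, \<eta>)"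
      by blast
    then show "\<exists>xk \<eta>k. (\<forall>k. \<eta>k k \<in> frechet_normal_cone Q (xk k)) \<and> xk \<longlonglongrightarrow> x \<and> \<eta>k \<longlonglongrightarrow> \<eta>"
      using tendsto_fst[of p] tendsto_snd[of p]
      by (intro exI[of _ "\<lambda>k. fst (p k)"] exI[of _ "\<lambda>k. snd (p k)"]) (auto simp: case_prod_beta)
  qed
  then show ?thesis unfolding limiting_normal_cone_def closure_sequential by blast
qed

lemma closed_limiting_normal_cone: "closed (limiting_normal_cone Q x)"
proof (cases "x \<in> Q")
  case True
  then have "limiting_normal_cone Q x =
      Pair x -` closure {(x', \<eta>'). \<eta>' \<in> frechet_normal_cone Q x'}"
    by (auto simp: limiting_normal_cone_closure)
  then show ?thesis
    by (simp add: continuous_closed_vimage continuous_Pair[OF continuous_const continuous_ident])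
next
  case False
  then show ?thesis by (simp add: limiting_normal_cone_def)
qed

lemma cone_limiting_normal_cone: "cone (limiting_normal_cone Q x)"
  unfolding cone_def
proof (intro ballI allI impI)
  fix \<eta> and c :: real assume "\<eta> \<in> limiting_normal_cone Q x" "c \<ge> 0"
  then obtain xk \<eta>k where \<eta>k: "x \<in> Q" "\<And>k. \<eta>k k \<in> frechet_normal_cone Q (xk k)" "xk \<longlonglongrightarrow> x" "\<eta>k \<longlonglongrightarrow> \<eta>"
    unfolding limiting_normal_cone_def by blast
  have "c *\<^sub>R \<eta>k k \<in> frechet_normal_cone Q (xk k)" for k
    using mem_cone[OF cone_frechet_normal_cone \<eta>k(2) \<open>c \<ge> 0\<close>] .
  moreover have "(\<lambda>k. c *\<^sub>R \<eta>k k) \<longlonglongrightarrow> c *\<^sub>R \<eta>" by (intro tendsto_intros \<eta>k(4))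
  ultimately show "c *\<^sub>R \<eta> \<in> limiting_normal_cone Q x"
    unfolding limiting_normal_cone_def using \<eta>k(1,3)
    by (intro CollectI conjI exI[of _ xk] exI[of _ "\<lambda>k. c *\<^sub>R \<eta>k k"]) auto
qed

lemma limiting_normal_cone_cone_orthogonal:
  assumes "cone C" "\<eta> \<in> limiting_normal_cone C x"
  shows "\<eta> \<bullet> x = 0"
proof -
  obtain xk \<eta>k where "\<forall>k. \<eta>k k \<in> frechet_normal_cone C (xk k)" "xk \<longlonglongrightarrow> x" "\<eta>k \<longlonglongrightarrow> \<eta>"
    using assms(2) unfolding limiting_normal_cone_def by blast
  then have "(\<lambda>k. 0) \<longlonglongrightarrow> \<eta> \<bullet> x"
    using tendsto_inner[of \<eta>k \<eta> sequentially xk x] frechet_normal_cone_cone_orthogonal[OF assms(1)]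
    by simp
  then show ?thesis using LIMSEQ_const_iff by metis
qed

lemma limiting_normal_cone_locally_conic:
  assumes "locally_conic_at D y C"
  shows "limiting_normal_cone C x \<subseteq> dir_limiting_normal_cone D y x \<inter> limiting_normal_cone D y"
proof
  fix \<eta> assume "\<eta> \<in> limiting_normal_cone C x"
  then obtain xk \<eta>k where "x \<in> C" and \<eta>k: "\<And>k. \<eta>k k \<in> frechet_normal_cone C (xk k)" "xk \<longlonglongrightarrow> x" "\<eta>k \<longlonglongrightarrow> \<eta>"
    unfolding limiting_normal_cone_def by blast
  obtain e where C: "cone C" "e > 0" and DC: "\<And>v. norm v < e \<Longrightarrow> y + v \<in> D \<longleftrightarrow> v \<in> C"
    using assms unfolding locally_conic_at_def by blast
  obtain t where t: "\<And>k. t k > 0" "t \<longlonglongrightarrow> 0" "(\<lambda>k. t k *\<^sub>R xk k) \<longlonglongrightarrow> 0"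
    "\<And>k. norm (t k *\<^sub>R xk k) < e"
    using exists_vanishing_scaling[OF \<open>e > 0\<close>] by blast
  have frechet_D: "\<eta>k k \<in> frechet_normal_cone D (y + t k *\<^sub>R xk k)" for k
    by (rule frechet_normal_cone_local_translate[OF DC t(4)
          frechet_normal_cone_cone_scaleR[OF C(1) t(1) \<eta>k(1)]])
  then have "\<eta> \<in> dir_limiting_normal_cone D y x"
    unfolding dir_limiting_normal_cone_def using t(1,2) \<eta>k(2,3) by blast
  moreover have "\<eta> \<in> limiting_normal_cone D y"
  proof -
    have "y \<in> D" using DC[of 0] \<open>x \<in> C\<close> C(1,2) cone_contains_0 by auto
    moreover have "(\<lambda>k. y + t k *\<^sub>R xk k) \<longlonglongrightarrow> y" using tendsto_add[OF tendsto_const t(3)] by simp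
    ultimately show ?thesis
      unfolding limiting_normal_cone_def using frechet_D \<eta>k(3)
      by (intro CollectI conjI exI[of _ "\<lambda>k. y + t k *\<^sub>R xk k"] exI[of _ \<eta>k]) auto
  qed
  ultimately show "\<eta> \<in> dir_limiting_normal_cone D y x \<inter> limiting_normal_cone D y" by blast
qed

lemma inner_hess_lag_apply: "hess_lag_apply H y u \<bullet> u = y \<bullet> H u u"
proof -
  have "hess_lag_apply H y u \<bullet> u = y \<bullet> (\<Sum>i\<in>Basis. (u \<bullet> i) *\<^sub>R H i u)"
    unfolding hess_lag_apply_def by (simp add: inner_sum_left inner_sum_right inner_commute mult.commute)
  also have "(\<Sum>i\<in>Basis. (u \<bullet> i) *\<^sub>R H i u) = H (\<Sum>i\<in>Basis. (u \<bullet> i) *\<^sub>R i) u"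
    by (simp only: blinfun.sum_right blinfun.sum_left blinfun.scaleR_right blinfun.scaleR_left)
  finally show ?thesis by (simp only: euclidean_representation)
qed

lemma hess_lag_apply_zero [simp]: "hess_lag_apply H 0 u = 0"
  by (simp add: hess_lag_apply_def)

lemma inner_adjoint_blinfun:
  fixes L :: "'a::euclidean_space \<Rightarrow>\<^sub>L 'b::euclidean_space"
  shows "x \<bullet> adjoint (blinfun_apply L) y = L x \<bullet> y"
  by (rule adjoint_works[OF bounded_linear.linear[OF blinfun.bounded_linear_right]])

lemma multiplier_vanishes:
  fixes L :: "'a::euclidean_space \<Rightarrow>\<^sub>L 'b::euclidean_space" and H :: "'a \<Rightarrow>\<^sub>L ('a \<Rightarrow>\<^sub>L 'b)"
  assumes sos: "\<And>y. y \<in> N \<Longrightarrow> adjoint L y = 0 \<Longrightarrow> y \<bullet> H u u \<ge> 0 \<Longrightarrow> y = 0"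
    and N_perp: "N \<subseteq> {p. p \<bullet> L u = 0}"
    and y: "y \<in> N" "adjoint L y = 0" and z: "z \<in> bouligand_tangent_cone N y"
    and "(hess_lag_apply H y u + adjoint L z) \<bullet> u \<ge> 0"
  shows "y = 0"
proof (rule sos[OF y])
  have "z \<bullet> L u = 0" using bouligand_tangent_cone_orthogonal[OF N_perp _ z] N_perp y(1) by blast
  then have "adjoint L z \<bullet> u = 0" using inner_adjoint_blinfun[of u L z] by (simp add: inner_commute)
  then show "y \<bullet> H u u \<ge> 0" using assms(6) by (simp add: inner_add_left inner_hess_lag_apply)
qed

theorem mainTheorem15:
  fixes g :: "'a::euclidean_space \<Rightarrow> real ^ 'm"
    and Dg :: "'a \<Rightarrow> ('a \<Rightarrow>\<^sub>L (real ^ 'm))"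
    and D2g :: "'a \<Rightarrow> ('a \<Rightarrow>\<^sub>L ('a \<Rightarrow>\<^sub>L (real ^ 'm)))"
    and D :: "(real ^ 'm) set"
    and xbar u :: 'a
  assumes g_deriv: "\<And>x. (g has_derivative blinfun_apply (Dg x)) (at x)"
    and Dg_deriv: "\<And>x. (Dg has_derivative blinfun_apply (D2g x)) (at x)"
    and D2g_cont: "continuous_on UNIV D2g"
    and D_closed: "closed D"
    and D_poly: "locally_polyhedral_at D (g xbar)"
    and feasible: "g xbar \<in> D"
    and u_unit: "norm u = 1"
    and SOSCMS: "\<And>ys. ys \<in> dir_limiting_normal_cone D (g xbar) (Dg xbar u) \<Longrightarrow>
                   adjoint (blinfun_apply (Dg xbar)) ys = 0 \<Longrightarrow>
                   ys \<bullet> D2g xbar u u \<ge> 0 \<Longrightarrow> ys = 0"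
  defines "K \<equiv> limiting_normal_cone (bouligand_tangent_cone D (g xbar)) (Dg xbar u)"
    and "T \<equiv> bouligand_tangent_cone (bouligand_tangent_cone D (g xbar)) (Dg xbar u)"
    and "w \<equiv> (\<lambda>s v. Dg xbar s + (1/2) *\<^sub>R D2g xbar u u - v)"
  shows
    "(\<forall>s ys zs.
        adjoint (blinfun_apply (Dg xbar)) ys = 0 \<longrightarrow>
        hess_lag_apply (D2g xbar) ys u + adjoint (blinfun_apply (Dg xbar)) zs = 0 \<longrightarrow>
        ys \<in> limiting_normal_cone T (w s 0) \<longrightarrow>
        zs \<in> bouligand_tangent_cone (limiting_normal_cone T (w s 0)) ys \<longrightarrow>
        ys = 0)
     \<and> (\<forall>xs s ys zs v.
        ys \<bullet> v \<ge> 0 \<longrightarrow>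
        xs = hess_lag_apply (D2g xbar) ys u + adjoint (blinfun_apply (Dg xbar)) zs \<longrightarrow>
        ys \<in> limiting_normal_cone T (w s v) \<inter> {y. adjoint (blinfun_apply (Dg xbar)) y = 0} \<longrightarrow>
        zs \<in> bouligand_tangent_cone (limiting_normal_cone T (w s v)) ys \<longrightarrow>
        (\<exists>lam\<in>K. xs = adjoint (blinfun_apply (Dg xbar)) lam))
     \<and> (\<forall>ys zs.
        adjoint (blinfun_apply (Dg xbar)) ys = 0 \<longrightarrow>
        hess_lag_apply (D2g xbar) ys u + adjoint (blinfun_apply (Dg xbar)) zs = 0 \<longrightarrow>
        ys \<in> K \<longrightarrow>
        zs \<in> bouligand_tangent_cone K ys \<longrightarrow>
        ys = 0)
     \<and> (\<forall>xs ys zs.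
        xs \<bullet> u \<ge> 0 \<longrightarrow>
        xs = hess_lag_apply (D2g xbar) ys u + adjoint (blinfun_apply (Dg xbar)) zs \<longrightarrow>
        ys \<in> K \<inter> {y. adjoint (blinfun_apply (Dg xbar)) y = 0} \<longrightarrow>
        zs \<in> bouligand_tangent_cone K ys \<longrightarrow>
        (\<exists>lam\<in>K. xs = adjoint (blinfun_apply (Dg xbar)) lam
                 \<and> lam \<in> limiting_normal_cone D (g xbar)))"
proof -
  let ?A = "adjoint (blinfun_apply (Dg xbar))"
  define a where "a = Dg xbar u"
  define TD where "TD = bouligand_tangent_cone D (g xbar)"
  have D_conic: "locally_conic_at D (g xbar) TD"
    unfolding TD_def by (rule locally_polyhedral_reduction(1)[OF D_poly])
  have TD_conic: "locally_conic_at TD a T"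
    unfolding T_def TD_def a_def[symmetric]
    by (rule locally_polyhedral_reduction(1)[OF locally_polyhedral_reduction(2)[OF D_poly]])
  have K_eq: "K = limiting_normal_cone TD a" unfolding K_def TD_def a_def ..
  have K_normals: "K \<subseteq> dir_limiting_normal_cone D (g xbar) a \<inter> limiting_normal_cone D (g xbar)"
    unfolding K_eq by (rule limiting_normal_cone_locally_conic[OF D_conic])
  have NT_K: "limiting_normal_cone T v \<subseteq> K" for v
    using limiting_normal_cone_locally_conic[OF TD_conic] unfolding K_eq by blast
  have K_perp: "K \<subseteq> {p. p \<bullet> a = 0}"
    using limiting_normal_cone_cone_orthogonal D_conic unfolding K_eq locally_conic_at_def by blast
  have sos: "y = 0" if "y \<in> N" "N \<subseteq> K" "?A y = 0" "y \<bullet> D2g xbar u u \<ge> 0" for y N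
    using SOSCMS K_normals that unfolding a_def by blast
  have tangent_at_0: "bouligand_tangent_cone (limiting_normal_cone Q x) 0 = limiting_normal_cone Q x"
    for Q and x :: "real ^ 'm"
    by (rule bouligand_tangent_cone_cone_at_0[OF cone_limiting_normal_cone closed_limiting_normal_cone])
  show ?thesis
  proof (intro conjI allI impI)
    fix s ys zs
    assume "?A ys = 0" "hess_lag_apply (D2g xbar) ys u + ?A zs = 0"
      "ys \<in> limiting_normal_cone T (w s 0)" "zs \<in> bouligand_tangent_cone (limiting_normal_cone T (w s 0)) ys"
    then show "ys = 0"
      using NT_K K_perp unfolding a_def by (intro multiplier_vanishes[OF sos]) auto
  next
    fix xs s ys zs v
    assume "ys \<bullet> v \<ge> 0" and xs: "xs = hess_lag_apply (D2g xbar) ys u + ?A zs"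
      and ys: "ys \<in> limiting_normal_cone T (w s v) \<inter> {y. ?A y = 0}"
      and zs: "zs \<in> bouligand_tangent_cone (limiting_normal_cone T (w s v)) ys"
    have "ys \<bullet> w s v = 0"
      using ys limiting_normal_cone_cone_orthogonal TD_conic unfolding locally_conic_at_def by blast
    moreover have "ys \<bullet> Dg xbar s = 0" using ys inner_adjoint_blinfun[of s "Dg xbar" ys] by (simp add: inner_commute)
    ultimately have "ys \<bullet> D2g xbar u u = 2 * (ys \<bullet> v)"
      unfolding w_def by (simp add: inner_add_right inner_diff_right)
    then have "ys = 0" using sos[of ys] ys NT_K \<open>ys \<bullet> v \<ge> 0\<close> by auto
    then show "\<exists>lam\<in>K. xs = ?A lam" using zs xs NT_K tangent_at_0 by auto
  next
    fix ys zs
    assume "?A ys = 0" "hess_lag_apply (D2g xbar) ys u + ?A zs = 0" "ys \<in> K" "zs \<in> bouligand_tangent_cone K ys"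
    then show "ys = 0"
      using K_perp unfolding a_def by (intro multiplier_vanishes[OF sos]) auto
  next
    fix xs ys zs
    assume "xs \<bullet> u \<ge> 0" and xs: "xs = hess_lag_apply (D2g xbar) ys u + ?A zs"
      and "ys \<in> K \<inter> {y. ?A y = 0}" and zs: "zs \<in> bouligand_tangent_cone K ys"
    then have "ys = 0"
      using K_perp unfolding a_def by (intro multiplier_vanishes[OF sos]) auto
    then show "\<exists>lam\<in>K. xs = ?A lam \<and> lam \<in> limiting_normal_cone D (g xbar)"
      using zs xs K_normals tangent_at_0 unfolding K_def by auto
  qed
qed

end
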